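(* Assume the Standing Setting below. Then for every $n\in\mathbb Z$ there exists a finite frame $\zeta_{(n,1)},\dots,\zeta_{(n,m_n)}$ for $\mathcal A_n\subseteq A_n$ such that $\sum_{j=1}^{m_n}\phi(\zeta_{(n,j)})\,\delta(\zeta_{(n,j)}^* )=0$.
   Context: Standing Setting: $A$ is a unital $C^*$-algebra with a strongly continuous action $\sigma$ of $S^1$; $A_n:=\{a:\sigma_\lambda(a)=\lambda^na\ \forall\lambda\}$, $P_0(a):=\frac1{2\pi}\int_0^{2\pi}\sigma_{e^{it}}(a)dt$. $\mathcal A\subseteq A$ is a norm-dense unital $*$-subalgebra with $P_0(\mathcal A)\subseteq\mathcal A$, generated as a $*$-algebra by $\mathcal A\cap A_1$; $\mathcal A_n:=\mathcal A\cap A_n$. $H_0$ is a separable Hilbert space, $\rho:A_0\to\mathcal B(H_0)$ an injective unital $*$-homomorphism, $D_0$ a selfadjoint operator on $H_0$ such that for every $a\in\mathcal A_0$, $\rho(a)$ preserves $\operatorname{Dom}(D_0)$ and $[D_0,\rho(a)]$ extends to a bounded operator $\delta_0(a)$. Moreover $H\supseteq H_0$ is a separable Hilbert space containing $H_0$ as a closed subspace, $\phi:A\to\mathcal B(H)$ a unital $*$-homomorphism and $\delta:\mathcal A\to\mathcal B(H)$ a linear map such that (1) $\delta(a)\xi=\delta_0(a)\xi$ and $\phi(a)\xi=\rho(a)\xi$ for $a\in\mathcal A_0$, $\xi\in H_0$; (2) there is $\mu>0$ with $\delta(ab)=\delta(a)\phi(b)+\mu^n\phi(a)\delta(b)$ whenever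 $a\in\mathcal A_n$, $b\in\mathcal A$; (3) there exist $\zeta^R_1,\dots,\zeta^R_k,\zeta^L_1,\dots,\zeta^L_m\in\mathcal A_1$ with $\sum_j\zeta_j^R(\zeta_j^R)^*=1=\sum_j(\zeta_j^L)^*\zeta_j^L$ and $\sum_j\phi(\zeta^R_j)\delta((\zeta^R_j)^* )=0=\sum_j\phi(\zeta_j^L)^*\delta(\zeta_j^L)$. A finite frame for $\mathcal A_n$ is a finite family $\zeta_1,\dots,\zeta_p\in\mathcal A_n$ with $\sum_j\zeta_j\zeta_j^*x=x$ for all $x\in\mathcal A_n$. *)

theory Defs
  imports "HOL-Analysis.Analysis"
begin

class complex_normed_vector = real_normed_vector +
  fixes cscale :: "complex \<Rightarrow> 'a \<Rightarrow> 'a"  (infixr \<open>*\<^sub>C\<close> 75)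
  assumes cscale_add_right: "c *\<^sub>C (x + y) = c *\<^sub>C x + c *\<^sub>C y"
    and cscale_add_left: "(c + d) *\<^sub>C x = c *\<^sub>C x + d *\<^sub>C x"
    and cscale_cscale: "c *\<^sub>C (d *\<^sub>C x) = (c * d) *\<^sub>C x"
    and cscale_one: "1 *\<^sub>C x = x"
    and scaleR_cscale: "r *\<^sub>R x = complex_of_real r *\<^sub>C x"
    and norm_cscale: "norm (c *\<^sub>C x) = cmod c * norm x"

text \<open>Unital C*-algebra (the zero algebra is allowed).\<close>
class cstar_algebra = complex_normed_vector + real_normed_algebra + ring_1 + banach +
  fixes cstar :: "'a \<Rightarrow> 'a"
  assumes cstar_cstar: "cstar (cstar x) = x"
    and cstar_add: "cstar (x + y) = cstar x + cstar y"
    and cstar_cscale: "cstar (c *\<^sub>C x) = cnj c *\<^sub>C cstar x"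
    and cstar_mult: "cstar (x * y) = cstar y * cstar x"
    and cscale_mult_left: "(c *\<^sub>C x) * y = c *\<^sub>C (x * y)"
    and cscale_mult_right: "x * (c *\<^sub>C y) = c *\<^sub>C (x * y)"
    and cstar_identity: "norm (cstar x * x) = (norm x)\<^sup>2"

text \<open>Complex inner product spaces (inner product conjugate-linear in the first argument).\<close>
class complex_inner = complex_normed_vector +
  fixes cinner :: "'a \<Rightarrow> 'a \<Rightarrow> complex"
  assumes cinner_add_right: "cinner x (y + z) = cinner x y + cinner x z"
    and cinner_cscale_right: "cinner x (c *\<^sub>C y) = c * cinner x y"
    and cinner_commute: "cinner y x = cnj (cinner x y)"
    and cinner_self: "cinner x x = complex_of_real ((norm x)\<^sup>2)"

class chilbert_space = complex_inner + banach

definition csubspace :: "'h::complex_normed_vector set \<Rightarrow> bool" where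
  "csubspace S \<longleftrightarrow> 0 \<in> S \<and> (\<forall>x\<in>S. \<forall>y\<in>S. x + y \<in> S) \<and> (\<forall>c. \<forall>x\<in>S. c *\<^sub>C x \<in> S)"

text \<open>A bounded (complex-)linear operator on the closed subspace S (represented by its values on S).\<close>
definition bounded_op_on :: "'h::complex_normed_vector set \<Rightarrow> ('h \<Rightarrow> 'h) \<Rightarrow> bool" where
  "bounded_op_on S T \<longleftrightarrow> T ` S \<subseteq> S
     \<and> (\<forall>x\<in>S. \<forall>y\<in>S. T (x + y) = T x + T y)
     \<and> (\<forall>c. \<forall>x\<in>S. T (c *\<^sub>C x) = c *\<^sub>C T x)
     \<and> (\<exists>K. \<forall>x\<in>S. norm (T x) \<le> K * norm x)"

text \<open>Selfadjoint (possibly unbounded) operator D with domain Dom on the Hilbert space H0: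
  densely defined, linear, and equal to its adjoint.\<close>
definition selfadjoint_on :: "'h::complex_inner set \<Rightarrow> 'h set \<Rightarrow> ('h \<Rightarrow> 'h) \<Rightarrow> bool" where
  "selfadjoint_on H0 Dom D \<longleftrightarrow> Dom \<subseteq> H0 \<and> csubspace Dom \<and> H0 \<subseteq> closure Dom
     \<and> D ` Dom \<subseteq> H0
     \<and> (\<forall>x\<in>Dom. \<forall>y\<in>Dom. D (x + y) = D x + D y)
     \<and> (\<forall>c. \<forall>x\<in>Dom. D (c *\<^sub>C x) = c *\<^sub>C D x)
     \<and> (\<forall>y\<in>H0. \<forall>z\<in>H0. (\<forall>x\<in>Dom. cinner (D x) y = cinner x z) \<longleftrightarrow> (y \<in> Dom \<and> z = D y))"

definition star_rep_on :: "'a::cstar_algebra set \<Rightarrow> 'h::complex_inner set \<Rightarrow> ('a \<Rightarrow> 'h \<Rightarrow> 'h) \<Rightarrow> bool" where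
  "star_rep_on B S \<pi> \<longleftrightarrow> (\<forall>a\<in>B. bounded_op_on S (\<pi> a))
     \<and> (\<forall>a\<in>B. \<forall>b\<in>B. \<forall>x\<in>S. \<pi> (a + b) x = \<pi> a x + \<pi> b x)
     \<and> (\<forall>c. \<forall>a\<in>B. \<forall>x\<in>S. \<pi> (c *\<^sub>C a) x = c *\<^sub>C \<pi> a x)
     \<and> (\<forall>a\<in>B. \<forall>b\<in>B. \<forall>x\<in>S. \<pi> (a * b) x = \<pi> a (\<pi> b x))
     \<and> (\<forall>x\<in>S. \<pi> 1 x = x)
     \<and> (\<forall>a\<in>B. \<forall>x\<in>S. \<forall>y\<in>S. cinner (\<pi> a x) y = cinner x (\<pi> (cstar a) y))"

definition circle_action :: "(complex \<Rightarrow> 'a::cstar_algebra \<Rightarrow> 'a) \<Rightarrow> bool" where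
  "circle_action \<sigma> \<longleftrightarrow>
     (\<forall>l\<in>sphere 0 1. (\<forall>a b. \<sigma> l (a + b) = \<sigma> l a + \<sigma> l b)
        \<and> (\<forall>c a. \<sigma> l (c *\<^sub>C a) = c *\<^sub>C \<sigma> l a)
        \<and> (\<forall>a b. \<sigma> l (a * b) = \<sigma> l a * \<sigma> l b)
        \<and> (\<forall>a. \<sigma> l (cstar a) = cstar (\<sigma> l a))
        \<and> \<sigma> l 1 = 1)
     \<and> (\<forall>a. \<sigma> 1 a = a)
     \<and> (\<forall>l\<in>sphere 0 1. \<forall>m\<in>sphere 0 1. \<forall>a. \<sigma> (l * m) a = \<sigma> l (\<sigma> m a))
     \<and> (\<forall>a. continuous_on (sphere 0 1) (\<lambda>l. \<sigma> l a))"

definition spec_sub :: "(complex \<Rightarrow> 'a::cstar_algebra \<Rightarrow> 'a) \<Rightarrow> int \<Rightarrow> 'a set" where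
  "spec_sub \<sigma> n = {a. \<forall>l\<in>sphere 0 1. \<sigma> l a = (l powi n) *\<^sub>C a}"

definition P0 :: "(complex \<Rightarrow> 'a::cstar_algebra \<Rightarrow> 'a) \<Rightarrow> 'a \<Rightarrow> 'a" where
  "P0 \<sigma> a = (1 / (2 * pi)) *\<^sub>R integral {0..2 * pi} (\<lambda>t. \<sigma> (cis t) a)"

definition unital_star_subalg :: "'a::cstar_algebra set \<Rightarrow> bool" where
  "unital_star_subalg B \<longleftrightarrow> 1 \<in> B \<and> (\<forall>x\<in>B. \<forall>y\<in>B. x + y \<in> B \<and> x * y \<in> B)
     \<and> (\<forall>c. \<forall>x\<in>B. c *\<^sub>C x \<in> B) \<and> (\<forall>x\<in>B. cstar x \<in> B)"

definition star_alg_gen :: "'a::cstar_algebra set \<Rightarrow> 'a set" where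
  "star_alg_gen S = \<Inter> {B. unital_star_subalg B \<and> S \<subseteq> B}"

definition finite_frame :: "'a::cstar_algebra set \<Rightarrow> nat \<Rightarrow> (nat \<Rightarrow> 'a) \<Rightarrow> bool" where
  "finite_frame X m \<zeta> \<longleftrightarrow> (\<forall>j<m. \<zeta> j \<in> X) \<and> (\<forall>x\<in>X. (\<Sum>j<m. \<zeta> j * cstar (\<zeta> j)) * x = x)"

end

theory Submission
  imports Defs
begin

(*
  Call \<zeta>_1, ..., \<zeta>_m in \<A>_n a unital frame if \<Sum>_j \<zeta>_j \<zeta>_j^* = 1 (then it is a finite frame for \<A>_n),
  and balanced if \<Sum>_j \<phi>(\<zeta>_j) \<delta>(\<zeta>_j^* ) = 0. For \<zeta> in degree n and g in degree s the twisted
  Leibniz rule, applied to \<delta>(g_j^* \<zeta>_w^* ), gives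
    \<Sum>_j \<phi>(\<zeta>_w g_j) \<delta>((\<zeta>_w g_j)^* )
      = \<phi>(\<zeta>_w) (\<Sum>_j \<phi>(g_j) \<delta>(g_j^* )) \<phi>(\<zeta>_w^* ) + \<mu>^(-s) \<phi>(\<zeta>_w) \<phi>(\<Sum>_j g_j g_j^* ) \<delta>(\<zeta>_w^* ),
  which is \<mu>^(-s) \<phi>(\<zeta>_w) \<delta>(\<zeta>_w^* ) when g is a balanced unital frame. Hence the products \<zeta>_w g_j
  form a balanced unital frame in degree n + s. Starting from {1} in degree 0 and multiplying
  repeatedly by \<zeta>^R (degree 1) or by (\<zeta>^L)^* (degree -1) reaches every degree.
*)

lemma cstar_one [simp]: "cstar (1::'a::cstar_algebra) = 1"
  using cstar_mult[of "cstar (1::'a)" 1] by (simp add: cstar_cstar)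

lemma cscale_zero_right [simp]: "c *\<^sub>C (0::'a::complex_normed_vector) = 0"
  using cscale_add_right[of c "0::'a" 0] by simp

lemma cscale_sum: "c *\<^sub>C (\<Sum>j\<in>A. f j) = (\<Sum>j\<in>A. c *\<^sub>C (f j :: 'a::complex_normed_vector))"
  using sum_comp_morphism[of "\<lambda>x. c *\<^sub>C x" f A, OF cscale_zero_right cscale_add_right]
  by (simp add: o_def)

lemma sum_lessThan_mult_nested:
  "(\<Sum>i<m * k. f i) = (\<Sum>w<m. \<Sum>j<k. f (w * k + j))" for f :: "nat \<Rightarrow> 'b::comm_monoid_add"
proof -
  have "(\<Sum>i\<in>{w * k..<w * k + k}. f i) = (\<Sum>j<k. f (w * k + j))" for w
    using sum.shift_bounds_nat_ivl[of f 0 "w * k" k] by (simp add: atLeast0LessThan add.commute)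
  then show ?thesis by (simp add: sum.nat_group[symmetric])
qed

lemma one_in_spec_sub_zero: "circle_action \<sigma> \<Longrightarrow> 1 \<in> spec_sub \<sigma> 0"
  by (auto simp: spec_sub_def circle_action_def cscale_one)

lemma spec_sub_mult:
  assumes act: "circle_action \<sigma>" and a: "a \<in> spec_sub \<sigma> n" and b: "b \<in> spec_sub \<sigma> s"
  shows "a * b \<in> spec_sub \<sigma> (n + s)"
  unfolding spec_sub_def
proof (intro CollectI ballI)
  fix l :: complex assume l: "l \<in> sphere 0 1"
  then have "l \<noteq> 0" by auto
  have "\<sigma> l (a * b) = \<sigma> l a * \<sigma> l b" using act l by (simp add: circle_action_def)
  also have "\<dots> = ((l powi n) *\<^sub>C a) * ((l powi s) *\<^sub>C b)" using a b l by (simp add: spec_sub_def)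
  also have "\<dots> = (l powi s * l powi n) *\<^sub>C (a * b)"
    by (simp only: cscale_mult_left cscale_mult_right cscale_cscale)
  also have "l powi s * l powi n = l powi (n + s)"
    using \<open>l \<noteq> 0\<close> by (simp add: power_int_add mult.commute)
  finally show "\<sigma> l (a * b) = (l powi (n + s)) *\<^sub>C (a * b)" .
qed

lemma spec_sub_cstar:
  assumes act: "circle_action \<sigma>" and a: "a \<in> spec_sub \<sigma> n"
  shows "cstar a \<in> spec_sub \<sigma> (-n)"
  unfolding spec_sub_def
proof (intro CollectI ballI)
  fix l :: complex assume l: "l \<in> sphere 0 1"
  have "norm (l powi n) = 1" using l by (simp add: norm_power_int)
  then have "l powi n * cnj (l powi n) = 1"
    using complex_norm_square[of "l powi n"] by simp
  then have cnj_powi: "cnj (l powi n) = l powi (-n)"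
    by (simp add: power_int_minus inverse_unique)
  have "\<sigma> l (cstar a) = cstar (\<sigma> l a)" using act l by (simp add: circle_action_def)
  also have "\<dots> = cstar ((l powi n) *\<^sub>C a)" using a l by (simp add: spec_sub_def)
  also have "\<dots> = cnj (l powi n) *\<^sub>C cstar a" by (rule cstar_cscale)
  finally show "\<sigma> l (cstar a) = (l powi (-n)) *\<^sub>C cstar a" using cnj_powi by simp
qed

lemma subalg_spec_sub_mult:
  assumes "circle_action \<sigma>" "unital_star_subalg B"
    and "a \<in> B \<inter> spec_sub \<sigma> n" "b \<in> B \<inter> spec_sub \<sigma> s"
  shows "a * b \<in> B \<inter> spec_sub \<sigma> (n + s)"
  using assms spec_sub_mult by (auto simp: unital_star_subalg_def)

lemma subalg_spec_sub_cstar: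
  assumes "circle_action \<sigma>" "unital_star_subalg B" "a \<in> B \<inter> spec_sub \<sigma> n"
  shows "cstar a \<in> B \<inter> spec_sub \<sigma> (-n)"
  using assms spec_sub_cstar by (auto simp: unital_star_subalg_def)

definition unital_frame :: "'a::cstar_algebra set \<Rightarrow> nat \<Rightarrow> (nat \<Rightarrow> 'a) \<Rightarrow> bool" where
  "unital_frame X m \<zeta> \<longleftrightarrow> (\<forall>j<m. \<zeta> j \<in> X) \<and> (\<Sum>j<m. \<zeta> j * cstar (\<zeta> j)) = 1"

lemma unital_frame_imp_finite_frame: "unital_frame X m \<zeta> \<Longrightarrow> finite_frame X m \<zeta>"
  by (simp add: unital_frame_def finite_frame_def)

definition frame_product :: "nat \<Rightarrow> (nat \<Rightarrow> 'a::times) \<Rightarrow> (nat \<Rightarrow> 'a) \<Rightarrow> nat \<Rightarrow> 'a" where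
  "frame_product k \<zeta> g i = \<zeta> (i div k) * g (i mod k)"

lemma frame_product_nested: "j < k \<Longrightarrow> frame_product k \<zeta> g (w * k + j) = \<zeta> w * g j"
  by (simp add: frame_product_def)

lemma unital_frame_product:
  assumes XY: "\<And>x y. x \<in> X \<Longrightarrow> y \<in> Y \<Longrightarrow> x * y \<in> Z"
    and \<zeta>: "unital_frame X m \<zeta>" and g: "unital_frame Y k g"
  shows "unital_frame Z (m * k) (frame_product k \<zeta> g)"
  unfolding unital_frame_def
proof
  show "\<forall>i<m * k. frame_product k \<zeta> g i \<in> Z"
  proof (intro allI impI)
    fix i assume i: "i < m * k"
    then have "i div k < m" "i mod k < k"
      by (auto simp: less_mult_imp_div_less intro!: mod_less_divisor gr0I)
    then show "frame_product k \<zeta> g i \<in> Z"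
      using XY \<zeta> g by (simp add: frame_product_def unital_frame_def)
  qed
  have "(\<Sum>i<m * k. frame_product k \<zeta> g i * cstar (frame_product k \<zeta> g i))
      = (\<Sum>w<m. \<zeta> w * (\<Sum>j<k. g j * cstar (g j)) * cstar (\<zeta> w))"
    by (simp add: sum_lessThan_mult_nested frame_product_nested cstar_mult mult.assoc
        sum_distrib_left sum_distrib_right)
  also have "\<dots> = 1" using \<zeta> g by (simp add: unital_frame_def)
  finally show "(\<Sum>i<m * k. frame_product k \<zeta> g i * cstar (frame_product k \<zeta> g i)) = 1" .
qed

definition delta_balanced ::
    "('a::cstar_algebra \<Rightarrow> 'h \<Rightarrow> 'h) \<Rightarrow> ('a \<Rightarrow> 'h \<Rightarrow> 'h::comm_monoid_add)
      \<Rightarrow> nat \<Rightarrow> (nat \<Rightarrow> 'a) \<Rightarrow> bool" where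
  "delta_balanced \<phi> \<delta> m \<zeta> \<longleftrightarrow> (\<forall>\<xi>. (\<Sum>j<m. \<phi> (\<zeta> j) (\<delta> (cstar (\<zeta> j)) \<xi>)) = 0)"

locale twisted_derivation =
  fixes \<sigma> :: "complex \<Rightarrow> 'a::cstar_algebra \<Rightarrow> 'a"
    and Acal :: "'a set"
    and \<phi> :: "'a \<Rightarrow> 'h::complex_inner \<Rightarrow> 'h" and \<delta> :: "'a \<Rightarrow> 'h \<Rightarrow> 'h"
    and \<mu> :: real
  assumes circle_action: "circle_action \<sigma>"
    and subalg: "unital_star_subalg Acal"
    and rep: "star_rep_on UNIV UNIV \<phi>"
    and twisted_leibniz: "\<forall>n::int. \<forall>a\<in>Acal \<inter> spec_sub \<sigma> n. \<forall>b\<in>Acal. \<forall>\<xi>.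
          \<delta> (a * b) \<xi> = \<delta> a (\<phi> b \<xi>) + complex_of_real (\<mu> powi n) *\<^sub>C \<phi> a (\<delta> b \<xi>)"
begin

lemma phi_add_right: "\<phi> a (x + y) = \<phi> a x + \<phi> a y"
  and phi_cscale_right: "\<phi> a (c *\<^sub>C x) = c *\<^sub>C \<phi> a x"
  and phi_add_left: "\<phi> (a + b) x = \<phi> a x + \<phi> b x"
  and phi_mult: "\<phi> (a * b) x = \<phi> a (\<phi> b x)"
  and phi_one: "\<phi> 1 x = x"
  using rep by (simp_all add: star_rep_on_def bounded_op_on_def)

lemma phi_zero_right: "\<phi> a 0 = 0"
  using phi_add_right[of a 0 0] by simp

lemma phi_zero_left: "\<phi> 0 x = 0"
  using phi_add_left[of 0 0] by simp

lemma phi_sum_right: "\<phi> a (\<Sum>j\<in>A. f j) = (\<Sum>j\<in>A. \<phi> a (f j))"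
  using sum_comp_morphism[of "\<phi> a" f A, OF phi_zero_right phi_add_right] by (simp add: o_def)

lemma phi_sum_left: "\<phi> (\<Sum>j\<in>A. g j) x = (\<Sum>j\<in>A. \<phi> (g j) x)"
  using sum_comp_morphism[of "\<lambda>a. \<phi> a x" g A, OF phi_zero_left phi_add_left] by (simp add: o_def)

lemma one_in_degree_zero: "1 \<in> Acal \<inter> spec_sub \<sigma> 0"
  using subalg one_in_spec_sub_zero[OF circle_action] by (simp add: unital_star_subalg_def)

lemma delta_one: "\<delta> 1 \<xi> = 0"
proof -
  have "\<delta> (1 * 1) \<xi> = \<delta> 1 (\<phi> 1 \<xi>) + complex_of_real (\<mu> powi 0) *\<^sub>C \<phi> 1 (\<delta> 1 \<xi>)"
    using twisted_leibniz one_in_degree_zero by blast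
  then have "\<delta> 1 \<xi> = \<delta> 1 \<xi> + \<delta> 1 \<xi>" by (simp add: phi_one cscale_one)
  then show ?thesis by simp
qed

lemma balanced_frame_one:
  "unital_frame (Acal \<inter> spec_sub \<sigma> 0) 1 (\<lambda>_. 1) \<and> delta_balanced \<phi> \<delta> 1 (\<lambda>_. 1)"
  using one_in_degree_zero by (simp add: unital_frame_def delta_balanced_def delta_one phi_one)

lemma sum_delta_left_mult_balanced:
  assumes a: "a \<in> Acal"
    and g: "unital_frame (Acal \<inter> spec_sub \<sigma> s) k g" and g_bal: "delta_balanced \<phi> \<delta> k g"
  shows "(\<Sum>j<k. \<phi> (a * g j) (\<delta> (cstar (a * g j)) \<xi>))
           = complex_of_real (\<mu> powi (-s)) *\<^sub>C \<phi> a (\<delta> (cstar a) \<xi>)"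
proof -
  define c where "c = complex_of_real (\<mu> powi (-s))"
  have leibniz: "\<phi> (a * g j) (\<delta> (cstar (a * g j)) \<xi>)
      = \<phi> a (\<phi> (g j) (\<delta> (cstar (g j)) (\<phi> (cstar a) \<xi>)))
        + \<phi> a (c *\<^sub>C \<phi> (g j * cstar (g j)) (\<delta> (cstar a) \<xi>))" if j: "j < k" for j
  proof -
    have "g j \<in> Acal \<inter> spec_sub \<sigma> s" using g j by (simp add: unital_frame_def)
    then have "cstar (g j) \<in> Acal \<inter> spec_sub \<sigma> (-s)"
      by (rule subalg_spec_sub_cstar[OF circle_action subalg])
    moreover have "cstar a \<in> Acal" using a subalg by (simp add: unital_star_subalg_def)
    ultimately have "\<delta> (cstar (g j) * cstar a) \<xi>
        = \<delta> (cstar (g j)) (\<phi> (cstar a) \<xi>) + c *\<^sub>C \<phi> (cstar (g j)) (\<delta> (cstar a) \<xi>)"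
      using twisted_leibniz unfolding c_def by blast
    then show ?thesis by (simp add: cstar_mult phi_mult phi_add_right phi_cscale_right)
  qed
  have "(\<Sum>j<k. \<phi> (a * g j) (\<delta> (cstar (a * g j)) \<xi>))
      = \<phi> a (\<Sum>j<k. \<phi> (g j) (\<delta> (cstar (g j)) (\<phi> (cstar a) \<xi>)))
        + \<phi> a (c *\<^sub>C \<phi> (\<Sum>j<k. g j * cstar (g j)) (\<delta> (cstar a) \<xi>))"
    by (simp add: leibniz sum.distrib phi_sum_right phi_sum_left cscale_sum)
  also have "\<dots> = c *\<^sub>C \<phi> a (\<delta> (cstar a) \<xi>)"
    using g g_bal
    by (simp add: unital_frame_def delta_balanced_def phi_zero_right phi_one phi_cscale_right)
  finally show ?thesis unfolding c_def .
qed

lemma balanced_frame_product: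
  assumes \<zeta>: "unital_frame (Acal \<inter> spec_sub \<sigma> n) m \<zeta>" and \<zeta>_bal: "delta_balanced \<phi> \<delta> m \<zeta>"
    and g: "unital_frame (Acal \<inter> spec_sub \<sigma> s) k g" and g_bal: "delta_balanced \<phi> \<delta> k g"
  shows "unital_frame (Acal \<inter> spec_sub \<sigma> (n + s)) (m * k) (frame_product k \<zeta> g)
    \<and> delta_balanced \<phi> \<delta> (m * k) (frame_product k \<zeta> g)"
proof
  show "unital_frame (Acal \<inter> spec_sub \<sigma> (n + s)) (m * k) (frame_product k \<zeta> g)"
    using unital_frame_product[OF _ \<zeta> g] subalg_spec_sub_mult[OF circle_action subalg] by blast
  have "(\<Sum>i<m * k. \<phi> (frame_product k \<zeta> g i) (\<delta> (cstar (frame_product k \<zeta> g i)) \<xi>))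
      = (\<Sum>w<m. complex_of_real (\<mu> powi (-s)) *\<^sub>C \<phi> (\<zeta> w) (\<delta> (cstar (\<zeta> w)) \<xi>))" for \<xi>
    using \<zeta> sum_delta_left_mult_balanced[OF _ g g_bal]
    by (simp add: sum_lessThan_mult_nested frame_product_nested unital_frame_def)
  then show "delta_balanced \<phi> \<delta> (m * k) (frame_product k \<zeta> g)"
    using \<zeta>_bal by (simp add: delta_balanced_def cscale_sum[symmetric])
qed

lemma balanced_frame_multiple_degree:
  assumes g: "unital_frame (Acal \<inter> spec_sub \<sigma> s) k g" and g_bal: "delta_balanced \<phi> \<delta> k g"
  shows "\<exists>m \<zeta>. unital_frame (Acal \<inter> spec_sub \<sigma> (int N * s)) m \<zeta> \<and> delta_balanced \<phi> \<delta> m \<zeta>"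
proof (induction N)
  case 0
  show ?case using balanced_frame_one by auto
next
  case (Suc N)
  then obtain m \<zeta> where "unital_frame (Acal \<inter> spec_sub \<sigma> (int N * s)) m \<zeta>"
    "delta_balanced \<phi> \<delta> m \<zeta>" by blast
  from balanced_frame_product[OF this g g_bal] show ?case
    by (auto simp: algebra_simps)
qed

end

theorem lemma7p6:
  fixes \<sigma> :: "complex \<Rightarrow> 'a::cstar_algebra \<Rightarrow> 'a"
    and Acal :: "'a set"
    and H0 :: "'h::chilbert_space set"
    and \<rho> :: "'a \<Rightarrow> 'h \<Rightarrow> 'h"
    and Dom0 :: "'h set" and D0 :: "'h \<Rightarrow> 'h" and \<delta>0 :: "'a \<Rightarrow> 'h \<Rightarrow> 'h"
    and \<phi> :: "'a \<Rightarrow> 'h \<Rightarrow> 'h" and \<delta> :: "'a \<Rightarrow> 'h \<Rightarrow> 'h"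
    and \<mu> :: real
    and kR :: nat and \<zeta>R :: "nat \<Rightarrow> 'a" and kL :: nat and \<zeta>L :: "nat \<Rightarrow> 'a"
  assumes act: "circle_action \<sigma>"
    and Acal_sub: "unital_star_subalg Acal"
    and Acal_dense: "closure Acal = UNIV"
    and Acal_P0: "P0 \<sigma> ` Acal \<subseteq> Acal"
    and Acal_gen: "Acal = star_alg_gen (Acal \<inter> spec_sub \<sigma> 1)"
    and H_sep: "\<exists>D::'h set. countable D \<and> closure D = UNIV"
    and H0_sub: "csubspace H0" and H0_closed: "closed H0"
    and rho_rep: "star_rep_on (spec_sub \<sigma> 0) H0 \<rho>"
    and rho_inj: "\<forall>a\<in>spec_sub \<sigma> 0. \<forall>b\<in>spec_sub \<sigma> 0. (\<forall>x\<in>H0. \<rho> a x = \<rho> b x) \<longrightarrow> a = b"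
    and D0_sa: "selfadjoint_on H0 Dom0 D0"
    and rho_dom: "\<forall>a\<in>Acal \<inter> spec_sub \<sigma> 0. \<rho> a ` Dom0 \<subseteq> Dom0"
    and delta0_bdd: "\<forall>a\<in>Acal \<inter> spec_sub \<sigma> 0. bounded_op_on H0 (\<delta>0 a)"
    and delta0_comm: "\<forall>a\<in>Acal \<inter> spec_sub \<sigma> 0. \<forall>x\<in>Dom0. \<delta>0 a x = D0 (\<rho> a x) - \<rho> a (D0 x)"
    and phi_rep: "star_rep_on UNIV UNIV \<phi>"
    and delta_bdd: "\<forall>a\<in>Acal. bounded_op_on UNIV (\<delta> a)"
    and delta_add: "\<forall>a\<in>Acal. \<forall>b\<in>Acal. \<forall>\<xi>. \<delta> (a + b) \<xi> = \<delta> a \<xi> + \<delta> b \<xi>"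
    and delta_scale: "\<forall>c. \<forall>a\<in>Acal. \<forall>\<xi>. \<delta> (c *\<^sub>C a) \<xi> = c *\<^sub>C \<delta> a \<xi>"
    and cond1: "\<forall>a\<in>Acal \<inter> spec_sub \<sigma> 0. \<forall>\<xi>\<in>H0. \<delta> a \<xi> = \<delta>0 a \<xi> \<and> \<phi> a \<xi> = \<rho> a \<xi>"
    and mu_pos: "\<mu> > 0"
    and cond2: "\<forall>n::int. \<forall>a\<in>Acal \<inter> spec_sub \<sigma> n. \<forall>b\<in>Acal. \<forall>\<xi>.
                  \<delta> (a * b) \<xi> = \<delta> a (\<phi> b \<xi>) + complex_of_real (\<mu> powi n) *\<^sub>C \<phi> a (\<delta> b \<xi>)"
    and zR_in: "\<forall>j<kR. \<zeta>R j \<in> Acal \<inter> spec_sub \<sigma> 1"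
    and zL_in: "\<forall>j<kL. \<zeta>L j \<in> Acal \<inter> spec_sub \<sigma> 1"
    and zR_sum: "(\<Sum>j<kR. \<zeta>R j * cstar (\<zeta>R j)) = 1"
    and zL_sum: "(\<Sum>j<kL. cstar (\<zeta>L j) * \<zeta>L j) = 1"
    and zR_delta: "\<forall>\<xi>. (\<Sum>j<kR. \<phi> (\<zeta>R j) (\<delta> (cstar (\<zeta>R j)) \<xi>)) = 0"
    and zL_delta: "\<forall>\<xi>. (\<Sum>j<kL. \<phi> (cstar (\<zeta>L j)) (\<delta> (\<zeta>L j) \<xi>)) = 0"
  shows "\<forall>n::int. \<exists>m \<zeta>. finite_frame (Acal \<inter> spec_sub \<sigma> n) m \<zeta>
            \<and> (\<forall>\<xi>. (\<Sum>j<m. \<phi> (\<zeta> j) (\<delta> (cstar (\<zeta> j)) \<xi>)) = 0)"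
proof
  fix n :: int
  interpret twisted_derivation \<sigma> Acal \<phi> \<delta> \<mu>
    using act Acal_sub phi_rep cond2 by unfold_locales
  have "\<exists>m \<zeta>. unital_frame (Acal \<inter> spec_sub \<sigma> n) m \<zeta> \<and> delta_balanced \<phi> \<delta> m \<zeta>"
  proof (cases "n \<ge> 0")
    case True
    have "unital_frame (Acal \<inter> spec_sub \<sigma> 1) kR \<zeta>R" "delta_balanced \<phi> \<delta> kR \<zeta>R"
      using zR_in zR_sum zR_delta by (simp_all add: unital_frame_def delta_balanced_def)
    from balanced_frame_multiple_degree[OF this, of "nat n"] True show ?thesis by simp
  next
    case False
    have "unital_frame (Acal \<inter> spec_sub \<sigma> (-1)) kL (\<lambda>j. cstar (\<zeta>L j))"
      "delta_balanced \<phi> \<delta> kL (\<lambda>j. cstar (\<zeta>L j))"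
      using zL_in zL_sum zL_delta subalg_spec_sub_cstar[OF act Acal_sub]
      by (auto simp: unital_frame_def delta_balanced_def cstar_cstar)
    from balanced_frame_multiple_degree[OF this, of "nat (-n)"] False show ?thesis by simp
  qed
  then show "\<exists>m \<zeta>. finite_frame (Acal \<inter> spec_sub \<sigma> n) m \<zeta>
      \<and> (\<forall>\<xi>. (\<Sum>j<m. \<phi> (\<zeta> j) (\<delta> (cstar (\<zeta> j)) \<xi>)) = 0)"
    by (auto simp: delta_balanced_def dest: unital_frame_imp_finite_frame)
qed

end
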